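(* Let $\tilde{\mathfrak g}$ be a real solvable Lie algebra with a metric $\langle,\rangle$ satisfying $\widetilde{\operatorname{Ric}}=\lambda\,\mathrm{id}$ with $\lambda\neq0$, and let $\tilde{\mathfrak g}=\mathfrak g\oplus^\perp\mathfrak a$ be a pseudo-Iwasawa decomposition. Then, up to isometric isomorphism, $\tilde{\mathfrak g}$ is a pseudo-Iwasawa extension of $\mathfrak g$ (with the induced metric $\langle,\rangle_{\mathfrak g}$): that is, the induced metric on $\mathfrak g$ satisfies $\operatorname{Ric}=\lambda\,\mathrm{id}+D$ for some $D\in\operatorname{Der}\mathfrak g$, and there is a Lie subalgebra $\mathfrak a'\subset\operatorname{Der}\mathfrak g$ of $\langle,\rangle_{\mathfrak g}$-self-adjoint derivations containing $D$, on which $\langle X,Y\rangle_{\mathrm{Tr}}=\operatorname{Tr}(XY)$ is nondegenerate, such that $\tilde{\mathfrak g}$ with its metric is isometrically isomorphic to the semidirect product $\mathfrak g\rtimes\mathfrak a'$ (with $[X,v]=X(v)$) endowed with the metric $\langle,\rangle_{\mathfrak g}-\frac1\lambda\langle,\rangle_{\mathrm{Tr}}$, $\mathfrak g\perp\mathfrak a'$.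
   Context: A metric on a Lie algebra is a nondegenerate symmetric bilinear form, possibly indefinite; Ricci operators are those of the corresponding left-invariant pseudo-Riemannian metrics on simply connected Lie groups. A pseudo-Iwasawa decomposition of a metric Lie algebra $\tilde{\mathfrak g}$ is an orthogonal direct sum of vector spaces $\tilde{\mathfrak g}=\mathfrak g\oplus^\perp\mathfrak a$ with $\mathfrak g$ a nilpotent ideal, $\mathfrak a$ an abelian subalgebra, and $\operatorname{ad}X$ self-adjoint for every $X\in\mathfrak a$. *)

theory Defs
  imports "HOL-Analysis.Analysis"
begin

text \<open>Finite-dimensional real Lie algebras are modelled as a linear subspace V of a
Euclidean space type 'v (only its real vector space structure is used; finite
dimension is automatic), with a bracket br and a metric m (nondegenerate symmetric
bilinear form, possibly indefinite). Values of br, m and of endomorphisms outside V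
are irrelevant.\<close>

definition bilinear_on :: "'v::real_vector set \<Rightarrow> ('v \<Rightarrow> 'v \<Rightarrow> 'w::real_vector) \<Rightarrow> bool" where
  "bilinear_on V f \<longleftrightarrow>
     (\<forall>x\<in>V. \<forall>y\<in>V. \<forall>z\<in>V. \<forall>c::real.
        f (x + y) z = f x z + f y z \<and> f z (x + y) = f z x + f z y \<and>
        f (c *\<^sub>R x) z = c *\<^sub>R f x z \<and> f z (c *\<^sub>R x) = c *\<^sub>R f z x)"

definition linear_on :: "'v::real_vector set \<Rightarrow> ('v \<Rightarrow> 'v) \<Rightarrow> bool" where
  "linear_on V f \<longleftrightarrow> (\<forall>x\<in>V. f x \<in> V) \<and>
     (\<forall>x\<in>V. \<forall>y\<in>V. \<forall>c::real. f (x + y) = f x + f y \<and> f (c *\<^sub>R x) = c *\<^sub>R f x)"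

definition lie_algebra :: "'v::real_vector set \<Rightarrow> ('v \<Rightarrow> 'v \<Rightarrow> 'v) \<Rightarrow> bool" where
  "lie_algebra V br \<longleftrightarrow> subspace V \<and> (\<forall>x\<in>V. \<forall>y\<in>V. br x y \<in> V) \<and> bilinear_on V br \<and>
     (\<forall>x\<in>V. br x x = 0) \<and>
     (\<forall>x\<in>V. \<forall>y\<in>V. \<forall>z\<in>V. br x (br y z) + br y (br z x) + br z (br x y) = 0)"

definition metric_on :: "'v::real_vector set \<Rightarrow> ('v \<Rightarrow> 'v \<Rightarrow> real) \<Rightarrow> bool" where
  "metric_on V m \<longleftrightarrow> bilinear_on V m \<and> (\<forall>x\<in>V. \<forall>y\<in>V. m x y = m y x) \<and>
     (\<forall>x\<in>V. (\<forall>y\<in>V. m x y = 0) \<longrightarrow> x = 0)"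

definition derived :: "('v::real_vector \<Rightarrow> 'v \<Rightarrow> 'v) \<Rightarrow> 'v set \<Rightarrow> 'v set" where
  "derived br W = span {br x y | x y. x \<in> W \<and> y \<in> W}"

definition solvable :: "'v::real_vector set \<Rightarrow> ('v \<Rightarrow> 'v \<Rightarrow> 'v) \<Rightarrow> bool" where
  "solvable V br \<longleftrightarrow> (\<exists>k. (derived br ^^ k) V = {0})"

definition lcs_step :: "('v::real_vector \<Rightarrow> 'v \<Rightarrow> 'v) \<Rightarrow> 'v set \<Rightarrow> 'v set \<Rightarrow> 'v set" where
  "lcs_step br V W = span {br x y | x y. x \<in> V \<and> y \<in> W}"

definition nilpotent :: "'v::real_vector set \<Rightarrow> ('v \<Rightarrow> 'v \<Rightarrow> 'v) \<Rightarrow> bool" where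
  "nilpotent V br \<longleftrightarrow> (\<exists>k. (lcs_step br V ^^ k) V = {0})"

definition ideal :: "'v::real_vector set \<Rightarrow> ('v \<Rightarrow> 'v \<Rightarrow> 'v) \<Rightarrow> 'v set \<Rightarrow> bool" where
  "ideal V br I \<longleftrightarrow> subspace I \<and> I \<subseteq> V \<and> (\<forall>x\<in>V. \<forall>y\<in>I. br x y \<in> I)"

definition abelian_subalgebra :: "'v::real_vector set \<Rightarrow> ('v \<Rightarrow> 'v \<Rightarrow> 'v) \<Rightarrow> 'v set \<Rightarrow> bool" where
  "abelian_subalgebra V br A \<longleftrightarrow> subspace A \<and> A \<subseteq> V \<and> (\<forall>x\<in>A. \<forall>y\<in>A. br x y = 0)"

definition pseudo_iwasawa :: "'v::real_vector set \<Rightarrow> ('v \<Rightarrow> 'v \<Rightarrow> 'v) \<Rightarrow> ('v \<Rightarrow> 'v \<Rightarrow> real)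
    \<Rightarrow> 'v set \<Rightarrow> 'v set \<Rightarrow> bool" where
  "pseudo_iwasawa V br m g a \<longleftrightarrow>
     ideal V br g \<and> nilpotent g br \<and> abelian_subalgebra V br a \<and>
     g \<inter> a = {0} \<and> (\<forall>v\<in>V. \<exists>x\<in>g. \<exists>y\<in>a. v = x + y) \<and>
     (\<forall>x\<in>g. \<forall>y\<in>a. m x y = 0) \<and>
     (\<forall>X\<in>a. \<forall>u\<in>V. \<forall>w\<in>V. m (br X u) w = m u (br X w))"

text \<open>Trace of an endomorphism f of a finite-dimensional subspace V, computed in some
basis of V (the value does not depend on the basis).\<close>

definition trace_on :: "'v::euclidean_space set \<Rightarrow> ('v \<Rightarrow> 'v) \<Rightarrow> real" where
  "trace_on V f = (let B = (SOME B. B \<subseteq> V \<and> independent B \<and> span B = V)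
                   in \<Sum>b\<in>B. representation B (f b) b)"

text \<open>Levi-Civita connection of the left-invariant metric (Koszul formula),
curvature R(X,Y) = [nabla_X, nabla_Y] - nabla_[X,Y], Ricci tensor
ric(Y,Z) = tr(X \<mapsto> R(X,Y)Z), and Ricci operator (m(Ric Y, Z) = ric(Y,Z)).\<close>

definition lc_nabla :: "'v::real_vector set \<Rightarrow> ('v \<Rightarrow> 'v \<Rightarrow> 'v) \<Rightarrow> ('v \<Rightarrow> 'v \<Rightarrow> real) \<Rightarrow> 'v \<Rightarrow> 'v \<Rightarrow> 'v" where
  "lc_nabla V br m x y = (THE w. w \<in> V \<and>
     (\<forall>z\<in>V. 2 * m w z = m (br x y) z - m (br y z) x + m (br z x) y))"

definition curvature :: "'v::real_vector set \<Rightarrow> ('v \<Rightarrow> 'v \<Rightarrow> 'v) \<Rightarrow> ('v \<Rightarrow> 'v \<Rightarrow> real) \<Rightarrow> 'v \<Rightarrow> 'v \<Rightarrow> 'v \<Rightarrow> 'v" where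
  "curvature V br m x y z =
     lc_nabla V br m x (lc_nabla V br m y z) - lc_nabla V br m y (lc_nabla V br m x z)
     - lc_nabla V br m (br x y) z"

definition ricci_tensor :: "'v::euclidean_space set \<Rightarrow> ('v \<Rightarrow> 'v \<Rightarrow> 'v) \<Rightarrow> ('v \<Rightarrow> 'v \<Rightarrow> real) \<Rightarrow> 'v \<Rightarrow> 'v \<Rightarrow> real" where
  "ricci_tensor V br m y z = trace_on V (\<lambda>x. curvature V br m x y z)"

definition ricci_op :: "'v::euclidean_space set \<Rightarrow> ('v \<Rightarrow> 'v \<Rightarrow> 'v) \<Rightarrow> ('v \<Rightarrow> 'v \<Rightarrow> real) \<Rightarrow> 'v \<Rightarrow> 'v" where
  "ricci_op V br m y = (THE w. w \<in> V \<and> (\<forall>z\<in>V. m w z = ricci_tensor V br m y z))"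

text \<open>Derivations of (V, br), represented as maps vanishing outside V (so that each
derivation has a unique representative and pointwise operations are the vector space
operations of Der V).\<close>

definition derivations :: "'v::real_vector set \<Rightarrow> ('v \<Rightarrow> 'v \<Rightarrow> 'v) \<Rightarrow> ('v \<Rightarrow> 'v) set" where
  "derivations V br = {D. linear_on V D \<and> (\<forall>x. x \<notin> V \<longrightarrow> D x = 0) \<and>
      (\<forall>x\<in>V. \<forall>y\<in>V. D (br x y) = br (D x) y + br x (D y))}"

definition self_adjoint_on :: "'v::real_vector set \<Rightarrow> ('v \<Rightarrow> 'v \<Rightarrow> real) \<Rightarrow> ('v \<Rightarrow> 'v) \<Rightarrow> bool" where
  "self_adjoint_on V m D \<longleftrightarrow> (\<forall>x\<in>V. \<forall>y\<in>V. m (D x) y = m x (D y))"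

definition der_subalgebra :: "'v::real_vector set \<Rightarrow> ('v \<Rightarrow> 'v \<Rightarrow> 'v) \<Rightarrow> ('v \<Rightarrow> 'v) set \<Rightarrow> bool" where
  "der_subalgebra V br A \<longleftrightarrow> A \<subseteq> derivations V br \<and> (\<lambda>_. 0) \<in> A \<and>
     (\<forall>X\<in>A. \<forall>Y\<in>A. (\<lambda>v. X v + Y v) \<in> A) \<and>
     (\<forall>X\<in>A. \<forall>c::real. (\<lambda>v. c *\<^sub>R X v) \<in> A) \<and>
     (\<forall>X\<in>A. \<forall>Y\<in>A. (\<lambda>v. X (Y v) - Y (X v)) \<in> A)"

definition trace_form :: "'v::euclidean_space set \<Rightarrow> ('v \<Rightarrow> 'v) \<Rightarrow> ('v \<Rightarrow> 'v) \<Rightarrow> real" where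
  "trace_form V X Y = trace_on V (\<lambda>v. X (Y v))"

definition sd_bracket :: "('v::real_vector \<Rightarrow> 'v \<Rightarrow> 'v) \<Rightarrow> 'v \<times> ('v \<Rightarrow> 'v) \<Rightarrow> 'v \<times> ('v \<Rightarrow> 'v) \<Rightarrow> 'v \<times> ('v \<Rightarrow> 'v)" where
  "sd_bracket br p q = (case p of (v, X) \<Rightarrow> case q of (w, Y) \<Rightarrow>
      (br v w + X w - Y v, (\<lambda>u. X (Y u) - Y (X u))))"

definition sd_metric :: "'v::euclidean_space set \<Rightarrow> ('v \<Rightarrow> 'v \<Rightarrow> real) \<Rightarrow> real
    \<Rightarrow> 'v \<times> ('v \<Rightarrow> 'v) \<Rightarrow> 'v \<times> ('v \<Rightarrow> 'v) \<Rightarrow> real" where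
  "sd_metric g m lam p q = (case p of (v, X) \<Rightarrow> case q of (w, Y) \<Rightarrow>
      m v w - (1 / lam) * trace_form g X Y)"

definition sd_isometric_iso :: "'v::euclidean_space set \<Rightarrow> ('v \<Rightarrow> 'v \<Rightarrow> 'v) \<Rightarrow> ('v \<Rightarrow> 'v \<Rightarrow> real)
    \<Rightarrow> 'v set \<Rightarrow> ('v \<Rightarrow> 'v) set \<Rightarrow> real \<Rightarrow> ('v \<times> ('v \<Rightarrow> 'v) \<Rightarrow> 'v) \<Rightarrow> bool" where
  "sd_isometric_iso V br m g A lam \<Phi> \<longleftrightarrow>
     bij_betw \<Phi> (g \<times> A) V \<and>
     (\<forall>v\<in>g. \<forall>w\<in>g. \<forall>X\<in>A. \<forall>Y\<in>A. \<forall>c::real.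
        \<Phi> (v + w, \<lambda>u. X u + Y u) = \<Phi> (v, X) + \<Phi> (w, Y) \<and>
        \<Phi> (c *\<^sub>R v, \<lambda>u. c *\<^sub>R X u) = c *\<^sub>R \<Phi> (v, X) \<and>
        \<Phi> (sd_bracket br (v, X) (w, Y)) = br (\<Phi> (v, X)) (\<Phi> (w, Y)) \<and>
        m (\<Phi> (v, X)) (\<Phi> (w, Y)) = sd_metric g m lam (v, X) (w, Y))"

end

theory Submission
  imports Defs
begin

text \<open>For X \<in> a the operator ad X is self-adjoint and a is abelian, so the Koszul formula gives
  nabla X = 0 and nabla u Y = -[Y, u] for u \<in> g, Y \<in> a, while for u, v \<in> g the connection
  splits as the Levi-Civita connection of g plus a second fundamental form with values in a.
  Computing the Ricci tensor in a basis adapted to g \<oplus> a, the Einstein equation on a \<times> a reads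
  Tr(ad X ad Y|g) = -\<lambda> \<langle>X, Y\<rangle>, and on g \<times> g (Gauss equation) it reads
  Ric_g = \<lambda> id + ad H|g, where H \<in> a is the mean curvature vector, \<langle>H, X\<rangle> = Tr(ad X|g).
  Hence X \<mapsto> ad X|g maps a injectively onto a Lie algebra of self-adjoint derivations of g
  containing D = ad H|g, it carries \<langle>,\<rangle> on a to -(1/\<lambda>) Tr, and (v, ad X|g) \<mapsto> v + X
  is the required isometric isomorphism.\<close>

section \<open>Nondegenerate symmetric bilinear forms\<close>

lemma sum_additive_on_subspace:
  assumes "subspace V"
    and add: "\<And>x y. x \<in> V \<Longrightarrow> y \<in> V \<Longrightarrow> \<phi> (x + y) = \<phi> x + \<phi> y"
    and zero: "\<phi> 0 = 0"
    and "finite S" "\<And>i. i \<in> S \<Longrightarrow> f i \<in> V"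
  shows "\<phi> (\<Sum>i\<in>S. f i) = (\<Sum>i\<in>S. \<phi> (f i))"
  using assms(4,5)
proof (induction S rule: finite_induct)
  case (insert x F)
  have "(\<Sum>i\<in>F. f i) \<in> V" using insert assms(1) by (auto intro: subspace_sum)
  then show ?case using insert by (simp add: add)
qed (simp add: zero)

lemma linear_on_sum:
  assumes "subspace V" and f: "linear_on V f" and "finite S" "\<And>i. i \<in> S \<Longrightarrow> x i \<in> V"
  shows "f (\<Sum>i\<in>S. x i) = (\<Sum>i\<in>S. f (x i))"
proof (rule sum_additive_on_subspace[OF assms(1) _ _ assms(3,4)])
  show "f (y + z) = f y + f z" if "y \<in> V" "z \<in> V" for y z using f that unfolding linear_on_def by blast
  have "f (0 *\<^sub>R 0) = 0 *\<^sub>R f 0" using f \<open>subspace V\<close> subspace_0 unfolding linear_on_def by blast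
  then show "f 0 = 0" by simp
qed

lemma linear_on_scaleR: "linear_on V f \<Longrightarrow> x \<in> V \<Longrightarrow> f (c *\<^sub>R x) = c *\<^sub>R f x"
  unfolding linear_on_def by blast

lemma subspace_basis_exists:
  assumes "subspace V"
  obtains B where "B \<subseteq> V" "independent B" "span B = V"
proof -
  obtain B where B: "B \<subseteq> V" "independent B" "V \<subseteq> span B"
    using basis_exists[of V] by metis
  moreover have "span B \<subseteq> V" using span_minimal[OF B(1) assms] .
  ultimately show ?thesis using that by blast
qed

lemma basis_expansion:
  fixes B :: "'a::euclidean_space set"
  assumes "B \<subseteq> V" "independent B" "span B = V" "z \<in> V"
  shows "z = (\<Sum>b\<in>B. representation B z b *\<^sub>R b)"
  using sum_representation_eq[of B z B] independent_bound[of B] assms by auto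

lemma linear_inj_on_endomorphism_surj:
  fixes T :: "'a::euclidean_space \<Rightarrow> 'a"
  assumes "linear T" "subspace V" "T ` V \<subseteq> V" "inj_on T V"
  shows "T ` V = V"
proof -
  have span_V: "span V = V" using assms(2) by (simp add: span_eq_iff)
  have "inj_on T (span V)" unfolding span_V by (rule assms(4))
  then have "dim (T ` V) = dim V" using dim_image_eq[OF assms(1)] by blast
  then show ?thesis
    using subspace_dim_equal[OF real_vector.linear_subspace_image[OF assms(1,2)] assms(2,3)] by simp
qed

lemma trace_on_basis:
  assumes "subspace V"
  obtains B where "B \<subseteq> V" "independent B" "span B = V"
    "\<And>f. trace_on V f = (\<Sum>b\<in>B. representation B (f b) b)"
proof -
  define B where "B = (SOME B. B \<subseteq> V \<and> independent B \<and> span B = V)"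
  have "B \<subseteq> V \<and> independent B \<and> span B = V"
    unfolding B_def by (rule someI_ex) (metis subspace_basis_exists[OF assms])
  then have B: "B \<subseteq> V" "independent B" "span B = V" by blast+
  show ?thesis by (rule that[OF B]) (simp add: trace_on_def B_def Let_def)
qed

lemma trace_on_cong:
  assumes "subspace V" "\<And>x. x \<in> V \<Longrightarrow> f x = h x"
  shows "trace_on V f = trace_on V h"
proof -
  obtain B where B: "B \<subseteq> V" "independent B" "span B = V"
    and tr: "\<And>f. trace_on V f = (\<Sum>b\<in>B. representation B (f b) b)"
    using trace_on_basis[OF assms(1)] by metis
  show ?thesis unfolding tr using B assms(2) by (intro sum.cong refl) auto
qed

lemma trace_on_add:
  assumes "subspace V" "\<And>x. x \<in> V \<Longrightarrow> f x \<in> V" "\<And>x. x \<in> V \<Longrightarrow> h x \<in> V"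
  shows "trace_on V (\<lambda>x. f x + h x) = trace_on V f + trace_on V h"
proof -
  obtain B where B: "B \<subseteq> V" "independent B" "span B = V"
    and tr: "\<And>f. trace_on V f = (\<Sum>b\<in>B. representation B (f b) b)"
    using trace_on_basis[OF assms(1)] by metis
  then have "representation B (f b + h b) b = representation B (f b) b + representation B (h b) b"
    if "b \<in> B" for b
    using that assms(2,3) by (auto simp: representation_add)
  then show ?thesis unfolding tr by (simp add: sum.distrib)
qed

lemma trace_on_scaleR:
  assumes "subspace V" "\<And>x. x \<in> V \<Longrightarrow> f x \<in> V"
  shows "trace_on V (\<lambda>x. c *\<^sub>R f x) = c * trace_on V f"
proof -
  obtain B where B: "B \<subseteq> V" "independent B" "span B = V"
    and tr: "\<And>f. trace_on V f = (\<Sum>b\<in>B. representation B (f b) b)"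
    using trace_on_basis[OF assms(1)] by metis
  then have "representation B (c *\<^sub>R f b) b = c * representation B (f b) b" if "b \<in> B" for b
    using that assms(2) by (auto simp: representation_scale)
  then show ?thesis unfolding tr by (simp add: sum_distrib_left)
qed

locale symmetric_bilinear_form =
  fixes m :: "'v::euclidean_space \<Rightarrow> 'v \<Rightarrow> real"
  assumes bilinear_m: "bilinear m" and m_commute: "m x y = m y x"
begin

lemma m_add_left: "m (x + x') y = m x y + m x' y" by (rule bilinear_ladd[OF bilinear_m])
lemma m_add_right: "m y (x + x') = m y x + m y x'" by (rule bilinear_radd[OF bilinear_m])
lemma m_diff_left: "m (x - x') y = m x y - m x' y" by (rule bilinear_lsub[OF bilinear_m])
lemma m_diff_right: "m y (x - x') = m y x - m y x'" by (rule bilinear_rsub[OF bilinear_m])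
lemma m_scale_left: "m (c *\<^sub>R x) y = c * m x y" using bilinear_lmul[OF bilinear_m] by simp
lemma m_scale_right: "m y (c *\<^sub>R x) = c * m y x" using bilinear_rmul[OF bilinear_m] by simp
lemma m_minus_left: "m (- x) y = - m x y" by (rule bilinear_lneg[OF bilinear_m])
lemma m_minus_right: "m y (- x) = - m y x" by (rule bilinear_rneg[OF bilinear_m])
lemma m_zero_left: "m 0 y = 0" by (rule bilinear_lzero[OF bilinear_m])
lemma m_zero_right: "m y 0 = 0" by (rule bilinear_rzero[OF bilinear_m])

lemma m_sum_left: "m (sum f S) y = (\<Sum>i\<in>S. m (f i) y)"
  using linear_sum[of "\<lambda>x. m x y"] bilinear_m unfolding bilinear_def by blast
lemma m_sum_right: "m y (sum f S) = (\<Sum>i\<in>S. m y (f i))"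
  using linear_sum[of "m y"] bilinear_m unfolding bilinear_def by blast

lemmas m_simps = m_add_left m_add_right m_diff_left m_diff_right m_scale_left m_scale_right
  m_minus_left m_minus_right m_zero_left m_zero_right m_sum_left m_sum_right

definition nondegenerate_on :: "'v set \<Rightarrow> bool" where
  "nondegenerate_on V \<longleftrightarrow> (\<forall>x\<in>V. (\<forall>y\<in>V. m x y = 0) \<longrightarrow> x = 0)"

lemma nondegenerate_on_eqI:
  assumes "subspace V" "nondegenerate_on V" "w \<in> V" "w' \<in> V" "\<And>z. z \<in> V \<Longrightarrow> m w z = m w' z"
  shows "w = w'"
proof -
  have "w - w' \<in> V" using assms by (simp add: subspace_diff)
  moreover have "\<forall>y\<in>V. m (w - w') y = 0" using assms(5) by (simp add: m_diff_left)
  ultimately show ?thesis using assms(2) unfolding nondegenerate_on_def by auto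
qed

lemma nondegenerate_on_orthogonal_summand:
  assumes "nondegenerate_on UNIV" "\<And>v. \<exists>x\<in>U. \<exists>y\<in>W. v = x + y" "\<And>x y. x \<in> U \<Longrightarrow> y \<in> W \<Longrightarrow> m x y = 0"
  shows "nondegenerate_on U"
  unfolding nondegenerate_on_def
proof (intro ballI impI)
  fix x assume x: "x \<in> U" and h: "\<forall>y\<in>U. m x y = 0"
  have "m x z = 0" for z
    using assms(2)[of z] h x assms(3) by (auto simp: m_add_right)
  then show "x = 0" using assms(1) unfolding nondegenerate_on_def by blast
qed

text \<open>The map w \<mapsto> (\<Sum>b\<in>B. m w b *R b) is injective on V by nondegeneracy, hence onto V.\<close>

lemma nondegenerate_on_prescribed_values:
  assumes V: "subspace V" and nd: "nondegenerate_on V" and B: "B \<subseteq> V" "independent B" "span B = V"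
  obtains w where "w \<in> V" "\<And>b. b \<in> B \<Longrightarrow> m w b = c b"
proof -
  define T where "T w = (\<Sum>b\<in>B. m w b *\<^sub>R b)" for w
  have "linear T"
    by (rule linearI) (simp_all add: T_def m_simps scaleR_add_left sum.distrib scaleR_sum_right)
  moreover have "T ` V \<subseteq> V"
    using B V by (auto simp: T_def intro!: subspace_sum subspace_scale)
  moreover have "inj_on T V"
    unfolding real_vector.linear_inj_on_iff_eq_0[OF \<open>linear T\<close> V]
  proof (intro ballI impI)
    fix w assume w: "w \<in> V" "T w = 0"
    then have "\<forall>b\<in>B. m w b = 0"
      using B(2) unfolding T_def independent_explicit by blast
    then have "m w z = 0" if "z \<in> V" for z
      by (subst basis_expansion[OF B that]) (simp add: m_simps)
    then show "w = 0" using nd w(1) unfolding nondegenerate_on_def by blast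
  qed
  ultimately have TV: "T ` V = V" by (rule linear_inj_on_endomorphism_surj[OF _ V])
  have "(\<Sum>b\<in>B. c b *\<^sub>R b) \<in> V" using B V by (auto intro!: subspace_sum subspace_scale)
  then obtain w where w: "w \<in> V" "T w = (\<Sum>b\<in>B. c b *\<^sub>R b)" using TV by (metis imageE)
  then have "(\<Sum>b\<in>B. (m w b - c b) *\<^sub>R b) = 0"
    by (simp add: T_def scaleR_diff_left sum_subtractf)
  then have "\<forall>b\<in>B. m w b = c b"
    using B(2) unfolding independent_explicit by (metis eq_iff_diff_eq_0)
  with w(1) that show ?thesis by blast
qed

lemma riesz_representation:
  assumes V: "subspace V" and nd: "nondegenerate_on V"
    and add: "\<And>x y. x \<in> V \<Longrightarrow> y \<in> V \<Longrightarrow> \<phi> (x + y) = \<phi> x + \<phi> y"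
    and scale: "\<And>x c. x \<in> V \<Longrightarrow> \<phi> (c *\<^sub>R x) = c * \<phi> x"
  obtains w where "w \<in> V" "\<And>z. z \<in> V \<Longrightarrow> m w z = \<phi> z"
proof -
  obtain B where B: "B \<subseteq> V" "independent B" "span B = V"
    using subspace_basis_exists[OF V] by metis
  have fin: "finite B" using B(2) independent_bound by blast
  have \<phi>_expand: "\<phi> z = (\<Sum>b\<in>B. representation B z b * \<phi> b)" if "z \<in> V" for z
  proof -
    have "\<phi> z = (\<Sum>b\<in>B. \<phi> (representation B z b *\<^sub>R b))"
      by (subst basis_expansion[OF B that], rule sum_additive_on_subspace[OF V add])
        (use fin B V scale[of 0 0] in \<open>auto intro: subspace_scale simp: subspace_0\<close>)
    then show ?thesis using B(1) by (simp add: scale subset_iff)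
  qed
  obtain w where w: "w \<in> V" "\<And>b. b \<in> B \<Longrightarrow> m w b = \<phi> b"
    using nondegenerate_on_prescribed_values[OF V nd B] by metis
  have "m w z = \<phi> z" if "z \<in> V" for z
    by (subst basis_expansion[OF B that]) (simp add: m_simps w(2) \<phi>_expand[OF that])
  with w(1) that show ?thesis by blast
qed

definition dual_basis :: "'v set \<Rightarrow> 'v set \<Rightarrow> ('v \<Rightarrow> 'v) \<Rightarrow> bool" where
  "dual_basis V B d \<longleftrightarrow> finite B \<and> B \<subseteq> V \<and> (\<forall>b\<in>B. d b \<in> V) \<and>
     (\<forall>b\<in>B. \<forall>c\<in>B. m c (d b) = (if c = b then 1 else 0)) \<and>
     (\<forall>w\<in>V. w = (\<Sum>b\<in>B. m w (d b) *\<^sub>R b))"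

lemma dual_basisD:
  assumes "dual_basis V B d"
  shows "finite B" "B \<subseteq> V" "\<And>b. b \<in> B \<Longrightarrow> d b \<in> V"
    "\<And>b c. b \<in> B \<Longrightarrow> c \<in> B \<Longrightarrow> m c (d b) = (if c = b then 1 else 0)"
    "\<And>w. w \<in> V \<Longrightarrow> w = (\<Sum>b\<in>B. m w (d b) *\<^sub>R b)"
  using assms unfolding dual_basis_def by blast+

lemma dual_basis_of_basis:
  assumes V: "subspace V" and nd: "nondegenerate_on V" and B: "B \<subseteq> V" "independent B" "span B = V"
  obtains d where "dual_basis V B d" "\<And>w b. w \<in> V \<Longrightarrow> b \<in> B \<Longrightarrow> m w (d b) = representation B w b"
proof -
  have fin: "finite B" using B(2) independent_bound by blast
  have "\<exists>w\<in>V. \<forall>z\<in>V. m w z = representation B z b" for b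
    using riesz_representation[OF V nd, of "\<lambda>z. representation B z b"] B
    by (metis representation_add representation_scale)
  then obtain d where d: "\<And>b. d b \<in> V" "\<And>b z. z \<in> V \<Longrightarrow> m (d b) z = representation B z b"
    by metis
  then have rep: "m w (d b) = representation B w b" if "w \<in> V" for w b
    using that m_commute by metis
  have "dual_basis V B d"
    unfolding dual_basis_def
  proof (intro conjI ballI)
    show "m c (d b) = (if c = b then 1 else 0)" if "b \<in> B" "c \<in> B" for b c
      using rep that B representation_basis[OF B(2) that(2)] by auto
    show "w = (\<Sum>b\<in>B. m w (d b) *\<^sub>R b)" if "w \<in> V" for w
      using basis_expansion[OF B that] rep[OF that] by simp
  qed (use fin B d in blast)+
  with rep that show ?thesis by blast
qed

lemma dual_basis_exists:
  assumes "subspace V" "nondegenerate_on V"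
  obtains B d where "dual_basis V B d"
  using subspace_basis_exists[OF assms(1)] dual_basis_of_basis[OF assms] by metis

lemma dual_basis_trace_eq:
  assumes V: "subspace V" and B: "dual_basis V B d" and C: "dual_basis V C e" and f: "linear_on V f"
  shows "(\<Sum>b\<in>B. m (f b) (d b)) = (\<Sum>c\<in>C. m (f c) (e c))"
proof -
  note B' = dual_basisD(1,2,5)[OF B] and C' = dual_basisD(1,2,5)[OF C]
  have f_expand: "f b = (\<Sum>c\<in>C. m b (e c) *\<^sub>R f c)" if "b \<in> V" for b
  proof -
    have "f b = (\<Sum>c\<in>C. f (m b (e c) *\<^sub>R c))"
      by (subst C'(3)[OF that], rule linear_on_sum[OF V f C'(1)])
        (use C'(2) V in \<open>auto intro: subspace_scale\<close>)
    also have "\<dots> = (\<Sum>c\<in>C. m b (e c) *\<^sub>R f c)"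
      using C'(2) f by (intro sum.cong refl) (auto simp: linear_on_scaleR)
    finally show ?thesis .
  qed
  have "(\<Sum>b\<in>B. m (f b) (d b)) = (\<Sum>b\<in>B. \<Sum>c\<in>C. m b (e c) * m (f c) (d b))"
  proof (intro sum.cong refl)
    fix b assume "b \<in> B"
    then show "m (f b) (d b) = (\<Sum>c\<in>C. m b (e c) * m (f c) (d b))"
      using B'(2) f_expand[of b] by (auto simp: m_sum_left m_scale_left)
  qed
  also have "\<dots> = (\<Sum>c\<in>C. \<Sum>b\<in>B. m (f c) (d b) * m b (e c))"
    by (subst sum.swap) (simp add: mult.commute)
  also have "\<dots> = (\<Sum>c\<in>C. m (\<Sum>b\<in>B. m (f c) (d b) *\<^sub>R b) (e c))"
    by (simp add: m_sum_left m_scale_left)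
  also have "\<dots> = (\<Sum>c\<in>C. m (f c) (e c))"
  proof (intro sum.cong refl)
    fix c assume "c \<in> C"
    then have "f c \<in> V" using C'(2) f unfolding linear_on_def by blast
    then show "m (\<Sum>b\<in>B. m (f c) (d b) *\<^sub>R b) (e c) = m (f c) (e c)" using B'(3) by metis
  qed
  finally show ?thesis .
qed

lemma trace_on_dual_basis:
  assumes V: "subspace V" and nd: "nondegenerate_on V" and B: "dual_basis V B d" and f: "linear_on V f"
  shows "trace_on V f = (\<Sum>b\<in>B. m (f b) (d b))"
proof -
  obtain B0 where B0: "B0 \<subseteq> V" "independent B0" "span B0 = V"
    and tr: "\<And>f. trace_on V f = (\<Sum>b\<in>B0. representation B0 (f b) b)"
    using trace_on_basis[OF V] by metis
  obtain d0 where d0: "dual_basis V B0 d0"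
    "\<And>w b. w \<in> V \<Longrightarrow> b \<in> B0 \<Longrightarrow> m w (d0 b) = representation B0 w b"
    using dual_basis_of_basis[OF V nd B0] by blast
  have "trace_on V f = (\<Sum>b\<in>B0. representation B0 (f b) b)" by (rule tr)
  also have "\<dots> = (\<Sum>b\<in>B0. m (f b) (d0 b))"
    using d0(2) B0 f unfolding linear_on_def by (intro sum.cong refl) auto
  also have "\<dots> = (\<Sum>b\<in>B. m (f b) (d b))"
    by (rule dual_basis_trace_eq[OF V d0(1) B f])
  finally show ?thesis .
qed

lemma dual_basis_orthogonal_sum:
  assumes E: "dual_basis U E dE" and F: "dual_basis W F dF"
    and orth: "\<And>x y. x \<in> U \<Longrightarrow> y \<in> W \<Longrightarrow> m x y = 0"
    and sum: "\<And>v. v \<in> V \<Longrightarrow> \<exists>x\<in>U. \<exists>y\<in>W. v = x + y" and "U \<subseteq> V" "W \<subseteq> V"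
  shows "E \<inter> F = {}" "dual_basis V (E \<union> F) (\<lambda>b. if b \<in> E then dE b else dF b)"
proof -
  note E' = dual_basisD[OF E] and F' = dual_basisD[OF F]
  have orth': "m y x = 0" if "x \<in> U" "y \<in> W" for x y using orth[OF that] m_commute by simp
  show disj: "E \<inter> F = {}"
  proof (rule ccontr)
    assume "E \<inter> F \<noteq> {}"
    then obtain e where "e \<in> E" "e \<in> F" by blast
    then show False using E'(3,4) F'(2) orth'[of "dE e" e] by auto
  qed
  define d where "d b = (if b \<in> E then dE b else dF b)" for b
  have delta: "m c (d b) = (if c = b then 1 else 0)" if "b \<in> E \<union> F" "c \<in> E \<union> F" for b c
    using that disj E'(2,3,4) F'(2,3,4) orth orth' unfolding d_def
    by (cases "b \<in> E"; cases "c \<in> E") (auto dest: subsetD)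
  have expand: "w = (\<Sum>b\<in>E \<union> F. m w (d b) *\<^sub>R b)" if w: "w \<in> V" for w
  proof -
    obtain x y where xy: "x \<in> U" "y \<in> W" "w = x + y" using sum[OF w] by blast
    have "(\<Sum>b\<in>E. m w (d b) *\<^sub>R b) = (\<Sum>b\<in>E. m x (dE b) *\<^sub>R b)"
      using xy E'(3) orth' by (intro sum.cong refl) (simp add: d_def m_add_left)
    moreover have "(\<Sum>b\<in>F. m w (d b) *\<^sub>R b) = (\<Sum>b\<in>F. m y (dF b) *\<^sub>R b)"
      using xy F'(3) orth disj by (intro sum.cong refl) (auto simp: d_def m_add_left)
    ultimately show ?thesis
      using E'(5)[OF xy(1)] F'(5)[OF xy(2)] xy(3) E'(1) F'(1) disj
      by (simp add: sum.union_disjoint)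
  qed
  have "finite (E \<union> F)" "E \<union> F \<subseteq> V" "\<forall>b\<in>E \<union> F. d b \<in> V"
    using E'(1,2,3) F'(1,2,3) assms(5,6) by (auto simp: d_def)
  with delta expand show "dual_basis V (E \<union> F) (\<lambda>b. if b \<in> E then dE b else dF b)"
    unfolding dual_basis_def d_def[symmetric] by blast
qed

end

section \<open>Levi-Civita connection and Ricci tensor\<close>

locale metric_bracket = symmetric_bilinear_form m
  for m :: "'v::euclidean_space \<Rightarrow> 'v \<Rightarrow> real" +
  fixes br :: "'v \<Rightarrow> 'v \<Rightarrow> 'v"
  assumes bilinear_br: "bilinear br"
begin

lemma br_add_left: "br (x + x') y = br x y + br x' y" by (rule bilinear_ladd[OF bilinear_br])
lemma br_add_right: "br y (x + x') = br y x + br y x'" by (rule bilinear_radd[OF bilinear_br])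
lemma br_diff_left: "br (x - x') y = br x y - br x' y" by (rule bilinear_lsub[OF bilinear_br])
lemma br_diff_right: "br y (x - x') = br y x - br y x'" by (rule bilinear_rsub[OF bilinear_br])
lemma br_scale_left: "br (c *\<^sub>R x) y = c *\<^sub>R br x y" by (rule bilinear_lmul[OF bilinear_br])
lemma br_scale_right: "br y (c *\<^sub>R x) = c *\<^sub>R br y x" by (rule bilinear_rmul[OF bilinear_br])
lemma br_minus_left: "br (- x) y = - br x y" by (rule bilinear_lneg[OF bilinear_br])
lemma br_minus_right: "br y (- x) = - br y x" by (rule bilinear_rneg[OF bilinear_br])
lemma br_zero_left: "br 0 y = 0" by (rule bilinear_lzero[OF bilinear_br])
lemma br_zero_right: "br y 0 = 0" by (rule bilinear_rzero[OF bilinear_br])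

lemma br_sum_left: "br (sum f S) y = (\<Sum>i\<in>S. br (f i) y)"
  using linear_sum[of "\<lambda>x. br x y"] bilinear_br unfolding bilinear_def by blast

lemmas br_simps = br_add_left br_add_right br_diff_left br_diff_right br_scale_left br_scale_right
  br_minus_left br_minus_right br_zero_left br_zero_right br_sum_left

definition koszul :: "'v \<Rightarrow> 'v \<Rightarrow> 'v \<Rightarrow> real" where
  "koszul x y z = m (br x y) z - m (br y z) x + m (br z x) y"

lemma koszul_add:
  "koszul (x + x') y z = koszul x y z + koszul x' y z"
  "koszul x (y + y') z = koszul x y z + koszul x y' z"
  "koszul x y (z + z') = koszul x y z + koszul x y z'"
  unfolding koszul_def by (simp_all add: m_simps br_simps)

lemma koszul_scale:
  "koszul (c *\<^sub>R x) y z = c * koszul x y z"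
  "koszul x (c *\<^sub>R y) z = c * koszul x y z"
  "koszul x y (c *\<^sub>R z) = c * koszul x y z"
  unfolding koszul_def by (simp_all add: m_simps br_simps algebra_simps)

context
  fixes V assumes V: "subspace V" and nd: "nondegenerate_on V"
begin

lemma lc_nabla_koszul:
  "lc_nabla V br m x y \<in> V" "\<And>z. z \<in> V \<Longrightarrow> 2 * m (lc_nabla V br m x y) z = koszul x y z"
proof -
  obtain w where w: "w \<in> V" "\<And>z. z \<in> V \<Longrightarrow> m w z = koszul x y z / 2"
    using riesz_representation[OF V nd, of "\<lambda>z. koszul x y z / 2"]
    by (metis koszul_add(3) koszul_scale(3) add_divide_distrib times_divide_eq_right)
  have "2 * m w z = koszul x y z" if "z \<in> V" for z using w(2)[OF that] by simp
  then have P: "w \<in> V \<and> (\<forall>z\<in>V. 2 * m w z = m (br x y) z - m (br y z) x + m (br z x) y)"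
    using w(1) by (simp add: koszul_def)
  have "lc_nabla V br m x y = w"
    unfolding lc_nabla_def
  proof (rule the_equality)
    fix w' assume "w' \<in> V \<and> (\<forall>z\<in>V. 2 * m w' z = m (br x y) z - m (br y z) x + m (br z x) y)"
    then show "w' = w"
      using P by (intro nondegenerate_on_eqI[OF V nd]) (auto, metis mult_cancel_left zero_neq_numeral)
  qed (rule P)
  then show "lc_nabla V br m x y \<in> V" "\<And>z. z \<in> V \<Longrightarrow> 2 * m (lc_nabla V br m x y) z = koszul x y z"
    using P by (simp_all add: koszul_def)
qed

lemma lc_nabla_eqI:
  assumes "w \<in> V" "\<And>z. z \<in> V \<Longrightarrow> 2 * m w z = koszul x y z"
  shows "lc_nabla V br m x y = w"
proof (rule nondegenerate_on_eqI[OF V nd lc_nabla_koszul(1) assms(1)])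
  fix z assume z: "z \<in> V"
  show "m (lc_nabla V br m x y) z = m w z" using lc_nabla_koszul(2)[OF z, where x=x and y=y] assms(2)[OF z] by simp
qed

lemma lc_nabla_add:
  "lc_nabla V br m (x + x') y = lc_nabla V br m x y + lc_nabla V br m x' y"
  "lc_nabla V br m x (y + y') = lc_nabla V br m x y + lc_nabla V br m x y'"
  by (rule lc_nabla_eqI; use lc_nabla_koszul V in \<open>simp add: koszul_add m_add_left distrib_left subspace_add\<close>)+

lemma lc_nabla_scale:
  "lc_nabla V br m (c *\<^sub>R x) y = c *\<^sub>R lc_nabla V br m x y"
  "lc_nabla V br m x (c *\<^sub>R y) = c *\<^sub>R lc_nabla V br m x y"
  by (rule lc_nabla_eqI; use lc_nabla_koszul V in \<open>simp add: koszul_scale m_scale_left subspace_scale\<close>)+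

lemma lc_nabla_linear: "linear (\<lambda>x. lc_nabla V br m x y)" "linear (lc_nabla V br m x)"
  by (rule linearI; simp add: lc_nabla_add lc_nabla_scale)+

lemma lc_nabla_zero: "lc_nabla V br m 0 y = 0" "lc_nabla V br m x 0 = 0"
  using linear_0[OF lc_nabla_linear(1)] linear_0[OF lc_nabla_linear(2)] by simp_all

lemma lc_nabla_minus: "lc_nabla V br m (- x) y = - lc_nabla V br m x y"
  using linear_neg[OF lc_nabla_linear(1)] by simp

lemma curvature_in: "curvature V br m x y z \<in> V"
  unfolding curvature_def using lc_nabla_koszul(1) V by (intro subspace_diff) auto

lemma curvature_add:
  "curvature V br m (x + x') y z = curvature V br m x y z + curvature V br m x' y z"
  "curvature V br m x y (z + z') = curvature V br m x y z + curvature V br m x y z'"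
  unfolding curvature_def by (simp_all add: lc_nabla_add br_add_left algebra_simps)

lemma curvature_scale:
  "curvature V br m (c *\<^sub>R x) y z = c *\<^sub>R curvature V br m x y z"
  "curvature V br m x y (c *\<^sub>R z) = c *\<^sub>R curvature V br m x y z"
  unfolding curvature_def by (simp_all add: lc_nabla_scale br_scale_left algebra_simps)

lemma ricci_tensor_dual_basis:
  assumes "dual_basis V B d"
  shows "ricci_tensor V br m y z = (\<Sum>b\<in>B. m (curvature V br m b y z) (d b))"
  unfolding ricci_tensor_def
  by (rule trace_on_dual_basis[OF V nd assms])
    (simp add: linear_on_def curvature_in curvature_add curvature_scale)

lemma ricci_op_ricci_tensor:
  "ricci_op V br m y \<in> V" "\<And>z. z \<in> V \<Longrightarrow> m (ricci_op V br m y) z = ricci_tensor V br m y z"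
proof -
  obtain B d where B: "dual_basis V B d" using dual_basis_exists[OF V nd] by blast
  obtain w where w: "w \<in> V" "\<And>z. z \<in> V \<Longrightarrow> m w z = ricci_tensor V br m y z"
    using riesz_representation[OF V nd, of "\<lambda>z. ricci_tensor V br m y z"]
    by (auto simp: ricci_tensor_dual_basis[OF B] curvature_add curvature_scale m_simps
        sum.distrib sum_distrib_left)
  have "ricci_op V br m y = w"
    unfolding ricci_op_def
  proof (rule the_equality)
    fix w' assume "w' \<in> V \<and> (\<forall>z\<in>V. m w' z = ricci_tensor V br m y z)"
    then show "w' = w" using w by (intro nondegenerate_on_eqI[OF V nd]) auto
  qed (use w in blast)
  then show "ricci_op V br m y \<in> V" "\<And>z. z \<in> V \<Longrightarrow> m (ricci_op V br m y) z = ricci_tensor V br m y z"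
    using w by simp_all
qed

lemma ricci_op_eqI:
  assumes "w \<in> V" "\<And>z. z \<in> V \<Longrightarrow> m w z = ricci_tensor V br m y z"
  shows "ricci_op V br m y = w"
  using ricci_op_ricci_tensor assms by (intro nondegenerate_on_eqI[OF V nd]) auto

end

end

section \<open>Pseudo-Iwasawa decompositions\<close>

lemma lie_algebra_anticommute:
  assumes "lie_algebra UNIV br" "bilinear br"
  shows "br x y = - br y x"
proof -
  have "br (x + y) (x + y) = br x x + br x y + br y x + br y y"
    using bilinear_ladd[OF assms(2)] bilinear_radd[OF assms(2)] by simp
  then have "br x y + br y x = 0" using assms(1) unfolding lie_algebra_def by simp
  then show ?thesis by (simp add: eq_neg_iff_add_eq_0)
qed

lemma lie_algebra_ad_derivation:
  assumes "lie_algebra UNIV br" "bilinear br"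
  shows "br x (br y z) = br (br x y) z + br y (br x z)"
proof -
  have "br x (br y z) + br y (br z x) + br z (br x y) = 0"
    using assms(1) unfolding lie_algebra_def by blast
  moreover have "br y (br z x) = - br y (br x z)" "br z (br x y) = - br (br x y) z"
    using lie_algebra_anticommute[OF assms] bilinear_rneg[OF assms(2)] by metis+
  ultimately show ?thesis by (simp add: algebra_simps)
qed

locale pseudo_iwasawa_metric =
  fixes br :: "'v::euclidean_space \<Rightarrow> 'v \<Rightarrow> 'v" and m :: "'v \<Rightarrow> 'v \<Rightarrow> real" and g a :: "'v set"
  assumes lie: "lie_algebra UNIV br" and metric: "metric_on UNIV m"
    and iwasawa: "pseudo_iwasawa UNIV br m g a"
begin

sublocale metric_bracket m br
proof
  show "bilinear br" "bilinear m"
    using lie metric unfolding lie_algebra_def metric_on_def bilinear_on_def bilinear_def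
    by (auto intro!: linearI)
  show "m x y = m y x" for x y using metric unfolding metric_on_def by blast
qed

lemma br_anticommute: "br x y = - br y x"
  by (rule lie_algebra_anticommute[OF lie bilinear_br])

lemma br_ad_derivation: "br x (br y z) = br (br x y) z + br y (br x z)"
  by (rule lie_algebra_ad_derivation[OF lie bilinear_br])

lemma subspace_g: "subspace g" and subspace_a: "subspace a"
  using iwasawa unfolding pseudo_iwasawa_def ideal_def abelian_subalgebra_def by blast+

lemma br_right_in_g: "y \<in> g \<Longrightarrow> br x y \<in> g"
  using iwasawa unfolding pseudo_iwasawa_def ideal_def by blast

lemma br_left_in_g: "y \<in> g \<Longrightarrow> br y x \<in> g"
  using br_right_in_g[of y x] br_anticommute[of y x] subspace_g subspace_neg by metis

lemma br_a_a: "X \<in> a \<Longrightarrow> Y \<in> a \<Longrightarrow> br X Y = 0"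
  using iwasawa unfolding pseudo_iwasawa_def abelian_subalgebra_def by blast

lemma g_a_sum: "\<exists>x\<in>g. \<exists>y\<in>a. v = x + y"
  using iwasawa unfolding pseudo_iwasawa_def by blast

lemma g_a_decomp:
  obtains x y where "x \<in> g" "y \<in> a" "v = x + y"
  using g_a_sum by blast

lemma m_g_a: "x \<in> g \<Longrightarrow> y \<in> a \<Longrightarrow> m x y = 0"
  using iwasawa unfolding pseudo_iwasawa_def by blast

lemma m_a_g: "x \<in> g \<Longrightarrow> y \<in> a \<Longrightarrow> m y x = 0"
  using m_g_a m_commute by metis

lemma g_inter_a: "x \<in> g \<Longrightarrow> x \<in> a \<Longrightarrow> x = 0"
  using iwasawa unfolding pseudo_iwasawa_def by blast

lemma ad_a_self_adjoint: "X \<in> a \<Longrightarrow> m (br X u) w = m u (br X w)"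
  using iwasawa unfolding pseudo_iwasawa_def by blast

lemma br_a_in_g: "X \<in> a \<Longrightarrow> br X z \<in> g"
  by (rule g_a_decomp[of z]) (simp add: br_add_right br_right_in_g br_a_a)

lemma nondegenerate_UNIV: "nondegenerate_on UNIV"
  using metric unfolding metric_on_def nondegenerate_on_def by blast

lemma nondegenerate_g: "nondegenerate_on g"
  by (rule nondegenerate_on_orthogonal_summand[OF nondegenerate_UNIV g_a_sum m_g_a])

lemma nondegenerate_a: "nondegenerate_on a"
proof (rule nondegenerate_on_orthogonal_summand[OF nondegenerate_UNIV])
  show "\<exists>x\<in>a. \<exists>y\<in>g. v = x + y" for v using g_a_sum[of v] by (metis add.commute)
qed (rule m_a_g)

abbreviation nabla :: "'v \<Rightarrow> 'v \<Rightarrow> 'v" where "nabla \<equiv> lc_nabla UNIV br m"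
abbreviation nabla_g :: "'v \<Rightarrow> 'v \<Rightarrow> 'v" where "nabla_g \<equiv> lc_nabla g br m"

text \<open>The a-component of nabla u v for u, v in g.\<close>

definition second_fundamental_form :: "'v \<Rightarrow> 'v \<Rightarrow> 'v" where
  "second_fundamental_form u v = (SOME w. w \<in> a \<and> (\<forall>Y\<in>a. m w Y = m (br Y u) v))"

lemma second_fundamental_form:
  "second_fundamental_form u v \<in> a"
  "\<And>Y. Y \<in> a \<Longrightarrow> m (second_fundamental_form u v) Y = m (br Y u) v"
proof -
  obtain w where "w \<in> a" "\<And>Y. Y \<in> a \<Longrightarrow> m w Y = m (br Y u) v"
    using riesz_representation[OF subspace_a nondegenerate_a, of "\<lambda>Y. m (br Y u) v"]
    by (metis br_add_left br_scale_left m_add_left m_scale_left)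
  then have "\<exists>w. w \<in> a \<and> (\<forall>Y\<in>a. m w Y = m (br Y u) v)" by blast
  from someI_ex[OF this] show "second_fundamental_form u v \<in> a"
    "\<And>Y. Y \<in> a \<Longrightarrow> m (second_fundamental_form u v) Y = m (br Y u) v"
    unfolding second_fundamental_form_def by blast+
qed

lemma nabla_g_g:
  assumes u: "u \<in> g" and v: "v \<in> g"
  shows "nabla u v = nabla_g u v + second_fundamental_form u v"
proof (rule lc_nabla_eqI[OF subspace_UNIV nondegenerate_UNIV])
  fix z :: 'v
  obtain zg za where z: "zg \<in> g" "za \<in> a" "z = zg + za" by (rule g_a_decomp)
  have ng: "nabla_g u v \<in> g" by (rule lc_nabla_koszul(1)[OF subspace_g nondegenerate_g])
  have "2 * m (nabla_g u v) zg = koszul u v zg"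
    using lc_nabla_koszul(2)[OF subspace_g nondegenerate_g z(1)] .
  moreover have "m (nabla_g u v) za = 0" using m_g_a ng z(2) by blast
  moreover have "m (second_fundamental_form u v) zg = 0"
    using m_a_g second_fundamental_form(1) z(1) by blast
  moreover have "m (second_fundamental_form u v) za = m (br za u) v"
    using second_fundamental_form(2) z(2) by blast
  moreover have "koszul u v za = 2 * m (br za u) v"
  proof -
    have "m (br u v) za = 0" using m_g_a br_right_in_g v z(2) by blast
    moreover have "m (br v za) u = - m (br za u) v"
      using br_anticommute[of v za] ad_a_self_adjoint[OF z(2), of v u] m_commute[of v "br za u"]
      by (simp add: m_minus_left)
    ultimately show ?thesis unfolding koszul_def by simp
  qed
  ultimately show "2 * m (nabla_g u v + second_fundamental_form u v) z = koszul u v z"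
    unfolding z(3) by (simp add: koszul_add m_add_left m_add_right algebra_simps)
qed simp

lemma nabla_g_a:
  assumes u: "u \<in> g" and Y: "Y \<in> a"
  shows "nabla u Y = - br Y u"
proof (rule lc_nabla_eqI[OF subspace_UNIV nondegenerate_UNIV])
  fix z :: 'v
  obtain zg za where z: "zg \<in> g" "za \<in> a" "z = zg + za" by (rule g_a_decomp)
  have "koszul u Y zg = - 2 * m (br Y u) zg"
  proof -
    have "m (br u Y) zg = - m (br Y u) zg" using br_anticommute[of u Y] by (simp add: m_minus_left)
    moreover have "m (br Y zg) u = m (br Y u) zg"
      using ad_a_self_adjoint[OF Y, of zg u] m_commute[of zg "br Y u"] by simp
    moreover have "m (br zg u) Y = 0" using m_g_a br_left_in_g z(1) Y by blast
    ultimately show ?thesis unfolding koszul_def by simp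
  qed
  moreover have "koszul u Y za = 0"
  proof -
    have "m (br u Y) za = 0" using m_g_a br_left_in_g u z(2) by blast
    moreover have "br Y za = 0" using br_a_a Y z(2) by blast
    moreover have "m (br za u) Y = 0" using m_g_a br_right_in_g u Y by blast
    ultimately show ?thesis unfolding koszul_def by (simp add: m_zero_left)
  qed
  moreover have "m (br Y u) za = 0" using m_g_a br_right_in_g[OF u] z(2) by blast
  ultimately show "2 * m (- br Y u) z = koszul u Y z"
    unfolding z(3) by (simp add: koszul_add m_minus_left m_add_right)
qed simp

lemma nabla_a:
  assumes X: "X \<in> a"
  shows "nabla X w = 0"
proof -
  have "koszul X w z = 0" for z
  proof -
    obtain wg wa where w: "wg \<in> g" "wa \<in> a" "w = wg + wa" by (rule g_a_decomp)
    obtain zg za where z: "zg \<in> g" "za \<in> a" "z = zg + za" by (rule g_a_decomp)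
    have ad_X: "m (br X wg) zg = m (br X zg) wg"
      using ad_a_self_adjoint[OF X] m_commute by metis
    have "m (br u v) X = 0" if "u \<in> g \<or> v \<in> g" for u v
      using that m_g_a[OF _ X] br_left_in_g br_right_in_g by blast
    moreover have "br u v = 0" if "u \<in> a" "v \<in> a" for u v using br_a_a that by blast
    ultimately show ?thesis
      unfolding koszul_def w(3) z(3) using w z X ad_X m_g_a[OF br_a_in_g[OF X]]
      by (simp add: m_simps br_simps br_anticommute[of _ X])
  qed
  then show ?thesis by (intro lc_nabla_eqI[OF subspace_UNIV nondegenerate_UNIV]) (simp_all add: m_zero_left)
qed

lemma linear_on_g_ad: "linear_on g (br X)"
  unfolding linear_on_def using subspace_g by (simp add: br_right_in_g br_add_right br_scale_right)

definition mean_curvature_vector :: 'v where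
  "mean_curvature_vector = (SOME H. H \<in> a \<and> (\<forall>X\<in>a. m H X = trace_on g (br X)))"

lemma mean_curvature_vector:
  "mean_curvature_vector \<in> a" "\<And>X. X \<in> a \<Longrightarrow> m mean_curvature_vector X = trace_on g (br X)"
proof -
  have trace_add: "trace_on g (br (X + Y)) = trace_on g (br X) + trace_on g (br Y)" for X Y
  proof -
    have "br (X + Y) = (\<lambda>v. br X v + br Y v)" by (rule ext) (simp add: br_add_left)
    then show ?thesis using trace_on_add[OF subspace_g] br_right_in_g by simp
  qed
  have trace_scale: "trace_on g (br (c *\<^sub>R X)) = c * trace_on g (br X)" for c X
  proof -
    have "br (c *\<^sub>R X) = (\<lambda>v. c *\<^sub>R br X v)" by (rule ext) (simp add: br_scale_left)
    then show ?thesis using trace_on_scaleR[OF subspace_g] br_right_in_g by simp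
  qed
  obtain H where "H \<in> a" "\<And>X. X \<in> a \<Longrightarrow> m H X = trace_on g (br X)"
    using riesz_representation[OF subspace_a nondegenerate_a, of "\<lambda>X. trace_on g (br X)"]
      trace_add trace_scale by metis
  then have "\<exists>H. H \<in> a \<and> (\<forall>X\<in>a. m H X = trace_on g (br X))" by blast
  from someI_ex[OF this] show "mean_curvature_vector \<in> a"
    "\<And>X. X \<in> a \<Longrightarrow> m mean_curvature_vector X = trace_on g (br X)"
    unfolding mean_curvature_vector_def by blast+
qed

lemma curvature_g_a_a:
  assumes e: "e \<in> g" and X: "X \<in> a" and Y: "Y \<in> a"
  shows "curvature UNIV br m e X Y = - br Y (br X e)"
proof -
  have "nabla (- br X e) Y = br Y (br X e)"
    using nabla_g_a[OF br_right_in_g[OF e] Y]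
    by (simp add: lc_nabla_minus[OF subspace_UNIV nondegenerate_UNIV] br_minus_right)
  then show ?thesis
    unfolding curvature_def using nabla_a[OF X] nabla_a[OF X] nabla_g_a[OF e Y] br_anticommute[of e X]
    by (simp add: lc_nabla_zero[OF subspace_UNIV nondegenerate_UNIV])
qed

lemma curvature_a_a_a:
  assumes Z: "Z \<in> a" and X: "X \<in> a"
  shows "curvature UNIV br m Z X Y = 0"
  unfolding curvature_def using br_a_a[OF Z X] nabla_a[OF X] nabla_a[OF Z]
  by (simp add: lc_nabla_zero[OF subspace_UNIV nondegenerate_UNIV])

lemma m_curvature_a_g_g:
  assumes X: "X \<in> a" and Z: "Z \<in> a" and v: "v \<in> g" and w: "w \<in> g"
  shows "m (curvature UNIV br m X v w) Z = - m (br Z (br X v)) w"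
proof -
  have "curvature UNIV br m X v w = - nabla_g (br X v) w - second_fundamental_form (br X v) w"
    unfolding curvature_def using nabla_a[OF X] nabla_g_g[OF br_right_in_g[OF v] w]
    by (simp add: lc_nabla_zero[OF subspace_UNIV nondegenerate_UNIV])
  moreover have "m (nabla_g (br X v) w) Z = 0"
    by (rule m_g_a[OF lc_nabla_koszul(1)[OF subspace_g nondegenerate_g] Z])
  ultimately show ?thesis using second_fundamental_form(2)[OF Z] by (simp add: m_simps)
qed

lemma m_curvature_g_g_g:
  assumes e: "e \<in> g" and v: "v \<in> g" and w: "w \<in> g" and u: "u \<in> g"
  shows "m (curvature UNIV br m e v w) u =
    m (curvature g br m e v w) u - m (br (second_fundamental_form v w) e) u
      + m (br (second_fundamental_form e w) v) u"
proof -
  note nabla_g_in = lc_nabla_koszul(1)[OF subspace_g nondegenerate_g]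
  note sff_in = second_fundamental_form(1)
  have ev: "nabla e (nabla v w) = nabla_g e (nabla_g v w) + second_fundamental_form e (nabla_g v w)
      - br (second_fundamental_form v w) e"
    using nabla_g_g[OF v w] nabla_g_g[OF e nabla_g_in] nabla_g_a[OF e sff_in]
    by (simp add: lc_nabla_add[OF subspace_UNIV nondegenerate_UNIV])
  have ve: "nabla v (nabla e w) = nabla_g v (nabla_g e w) + second_fundamental_form v (nabla_g e w)
      - br (second_fundamental_form e w) v"
    using nabla_g_g[OF e w] nabla_g_g[OF v nabla_g_in] nabla_g_a[OF v sff_in]
    by (simp add: lc_nabla_add[OF subspace_UNIV nondegenerate_UNIV])
  have br_ev: "nabla (br e v) w = nabla_g (br e v) w + second_fundamental_form (br e v) w"
    by (rule nabla_g_g[OF br_right_in_g[OF v] w])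
  have "m (second_fundamental_form x y) u = 0" for x y by (rule m_a_g[OF u sff_in])
  then show ?thesis unfolding curvature_def ev ve br_ev by (simp add: m_simps)
qed

context
  fixes E F :: "'v set" and dE dF :: "'v \<Rightarrow> 'v"
  assumes E: "dual_basis g E dE" and F: "dual_basis a F dF"
begin

lemma ricci_tensor_adapted_basis:
  "ricci_tensor UNIV br m y z =
     (\<Sum>e\<in>E. m (curvature UNIV br m e y z) (dE e)) + (\<Sum>X\<in>F. m (curvature UNIV br m X y z) (dF X))"
proof -
  note EF = dual_basis_orthogonal_sum[OF E F m_g_a g_a_sum subset_UNIV subset_UNIV]
  note disj = EF(1)
  have "(\<Sum>X\<in>F. m (curvature UNIV br m X y z) (if X \<in> E then dE X else dF X))
      = (\<Sum>X\<in>F. m (curvature UNIV br m X y z) (dF X))"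
    using disj by (intro sum.cong refl) auto
  then show ?thesis
    using disj dual_basisD(1)[OF E] dual_basisD(1)[OF F]
    by (simp add: ricci_tensor_dual_basis[OF subspace_UNIV nondegenerate_UNIV EF(2)] sum.union_disjoint)
qed

lemma sum_second_fundamental_form_bracket:
  assumes v: "v \<in> g" and w: "w \<in> g"
  shows "(\<Sum>e\<in>E. m (br (second_fundamental_form e w) v) (dE e)) = (\<Sum>X\<in>F. m (br (dF X) (br X v)) w)"
proof -
  note E' = dual_basisD[OF E] and F' = dual_basisD[OF F]
  have "(\<Sum>e\<in>E. m (br (second_fundamental_form e w) v) (dE e))
      = (\<Sum>e\<in>E. \<Sum>X\<in>F. m (br (dF X) e) w * m (br X v) (dE e))"
  proof (intro sum.cong refl)
    fix e
    have "second_fundamental_form e w = (\<Sum>X\<in>F. m (br (dF X) e) w *\<^sub>R X)"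
      using F'(5)[OF second_fundamental_form(1)] second_fundamental_form(2)[OF F'(3)] by simp
    then show "m (br (second_fundamental_form e w) v) (dE e) = (\<Sum>X\<in>F. m (br (dF X) e) w * m (br X v) (dE e))"
      by (simp add: br_sum_left br_scale_left m_sum_left m_scale_left)
  qed
  also have "\<dots> = (\<Sum>X\<in>F. \<Sum>e\<in>E. m (br (dF X) e) w * m (br X v) (dE e))"
    by (rule sum.swap)
  also have "\<dots> = (\<Sum>X\<in>F. m (br (dF X) (br X v)) w)"
  proof (intro sum.cong refl)
    fix X assume X: "X \<in> F"
    have "(\<Sum>e\<in>E. m (br (dF X) e) w * m (br X v) (dE e)) = (\<Sum>e\<in>E. m (br X v) (dE e) * m e (br (dF X) w))"
      using ad_a_self_adjoint[OF F'(3)[OF X]] by (simp add: mult.commute)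
    also have "\<dots> = m (\<Sum>e\<in>E. m (br X v) (dE e) *\<^sub>R e) (br (dF X) w)"
      by (simp add: m_sum_left m_scale_left)
    also have "\<dots> = m (br X v) (br (dF X) w)" using E'(5)[OF br_right_in_g[OF v]] by simp
    also have "\<dots> = m (br (dF X) (br X v)) w"
      using ad_a_self_adjoint[OF F'(3)[OF X], of "br X v" w] m_commute by metis
    finally show "(\<Sum>e\<in>E. m (br (dF X) e) w * m (br X v) (dE e)) = m (br (dF X) (br X v)) w" .
  qed
  finally show ?thesis .
qed

end

lemma ricci_tensor_a_a:
  assumes X: "X \<in> a" and Y: "Y \<in> a"
  shows "ricci_tensor UNIV br m X Y = - trace_on g (\<lambda>e. br Y (br X e))"
proof -
  obtain E dE where E: "dual_basis g E dE" using dual_basis_exists[OF subspace_g nondegenerate_g] .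
  obtain F dF where F: "dual_basis a F dF" using dual_basis_exists[OF subspace_a nondegenerate_a] .
  have "linear_on g (\<lambda>e. br Y (br X e))"
    using linear_on_g_ad unfolding linear_on_def by (simp add: br_simps)
  then have "trace_on g (\<lambda>e. br Y (br X e)) = (\<Sum>e\<in>E. m (br Y (br X e)) (dE e))"
    by (rule trace_on_dual_basis[OF subspace_g nondegenerate_g E])
  then show ?thesis
    unfolding ricci_tensor_adapted_basis[OF E F]
    using curvature_g_a_a[OF _ X Y] curvature_a_a_a[OF _ X] dual_basisD(2)[OF E] dual_basisD(2)[OF F]
    by (simp add: subset_iff m_simps sum_negf)
qed

lemma ricci_tensor_g_g:
  assumes v: "v \<in> g" and w: "w \<in> g"
  shows "ricci_tensor UNIV br m v w = ricci_tensor g br m v w - m (br mean_curvature_vector v) w"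
proof -
  obtain E dE where E: "dual_basis g E dE" using dual_basis_exists[OF subspace_g nondegenerate_g] .
  obtain F dF where F: "dual_basis a F dF" using dual_basis_exists[OF subspace_a nondegenerate_a] .
  note E' = dual_basisD[OF E] and F' = dual_basisD[OF F] and sff = second_fundamental_form
  have "(\<Sum>e\<in>E. m (br (second_fundamental_form v w) e) (dE e))
      = trace_on g (br (second_fundamental_form v w))"
    by (rule trace_on_dual_basis[OF subspace_g nondegenerate_g E linear_on_g_ad, symmetric])
  also have "\<dots> = m (br mean_curvature_vector v) w"
    using mean_curvature_vector sff m_commute by metis
  finally have trace_sff: "(\<Sum>e\<in>E. m (br (second_fundamental_form v w) e) (dE e))
      = m (br mean_curvature_vector v) w" .
  have "ricci_tensor UNIV br m v w =
     (\<Sum>e\<in>E. m (curvature g br m e v w) (dE e) - m (br (second_fundamental_form v w) e) (dE e)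
        + m (br (second_fundamental_form e w) v) (dE e))
     + (\<Sum>X\<in>F. - m (br (dF X) (br X v)) w)"
    unfolding ricci_tensor_adapted_basis[OF E F]
    using m_curvature_g_g_g[OF _ v w] m_curvature_a_g_g[OF _ _ v w] E'(2,3) F'(2,3)
    by (simp add: subset_iff)
  also have "\<dots> = ricci_tensor g br m v w - m (br mean_curvature_vector v) w"
    using trace_sff sum_second_fundamental_form_bracket[OF E F v w]
      ricci_tensor_dual_basis[OF subspace_g nondegenerate_g E, of v w]
    by (simp add: sum.distrib sum_subtractf sum_negf)
  finally show ?thesis .
qed

text \<open>ad X restricted to g, set to 0 off g as required of the elements of derivations g br.\<close>

definition ad_on_g :: "'v \<Rightarrow> 'v \<Rightarrow> 'v" where
  "ad_on_g X v = (if v \<in> g then br X v else 0)"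

lemma ad_on_g_add: "ad_on_g (X + Y) = (\<lambda>v. ad_on_g X v + ad_on_g Y v)"
  and ad_on_g_scale: "ad_on_g (c *\<^sub>R X) = (\<lambda>v. c *\<^sub>R ad_on_g X v)"
  and ad_on_g_zero: "ad_on_g 0 = (\<lambda>_. 0)"
  by (simp_all add: fun_eq_iff ad_on_g_def br_simps)

lemma ad_on_g_commutator:
  assumes "X \<in> a" "Y \<in> a"
  shows "(\<lambda>v. ad_on_g X (ad_on_g Y v) - ad_on_g Y (ad_on_g X v)) = ad_on_g 0"
  using br_ad_derivation[of X Y] br_a_a[OF assms] br_right_in_g
  by (simp add: fun_eq_iff ad_on_g_def br_zero_left br_zero_right)

lemma ad_on_g_derivation: "ad_on_g X \<in> derivations g br"
  unfolding derivations_def linear_on_def ad_on_g_def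
  using subspace_g br_right_in_g br_ad_derivation[of X]
  by (simp add: subspace_add subspace_scale br_add_right br_scale_right)

lemma ad_on_g_self_adjoint: "X \<in> a \<Longrightarrow> self_adjoint_on g m (ad_on_g X)"
  unfolding self_adjoint_on_def ad_on_g_def using ad_a_self_adjoint by simp

lemma der_subalgebra_ad_on_g: "der_subalgebra g br (ad_on_g ` a)"
  unfolding der_subalgebra_def
proof (intro conjI ballI allI)
  have zero: "0 \<in> a" by (rule subspace_0[OF subspace_a])
  show "ad_on_g ` a \<subseteq> derivations g br" using ad_on_g_derivation by blast
  show "(\<lambda>_. 0) \<in> ad_on_g ` a" unfolding ad_on_g_zero[symmetric] using zero by (rule imageI)
  fix X' Y' assume "X' \<in> ad_on_g ` a" "Y' \<in> ad_on_g ` a"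
  then obtain X Y where X: "X \<in> a" "X' = ad_on_g X" and Y: "Y \<in> a" "Y' = ad_on_g Y" by blast
  show "(\<lambda>v. X' v + Y' v) \<in> ad_on_g ` a"
    unfolding X(2) Y(2) ad_on_g_add[symmetric] using subspace_add[OF subspace_a X(1) Y(1)] by (rule imageI)
  show "(\<lambda>v. X' (Y' v) - Y' (X' v)) \<in> ad_on_g ` a"
    unfolding X(2) Y(2) ad_on_g_commutator[OF X(1) Y(1)] using zero by (rule imageI)
next
  fix X' and c :: real assume "X' \<in> ad_on_g ` a"
  then obtain X where X: "X \<in> a" "X' = ad_on_g X" by blast
  show "(\<lambda>v. c *\<^sub>R X' v) \<in> ad_on_g ` a"
    unfolding X(2) ad_on_g_scale[symmetric] using subspace_scale[OF subspace_a X(1)] by (rule imageI)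
qed

end

section \<open>Einstein pseudo-Iwasawa extensions\<close>

locale einstein_pseudo_iwasawa = pseudo_iwasawa_metric br m g a
  for br :: "'v::euclidean_space \<Rightarrow> 'v \<Rightarrow> 'v" and m g a +
  fixes lam :: real
  assumes einstein: "\<forall>x. ricci_op UNIV br m x = lam *\<^sub>R x" and lam_nonzero: "lam \<noteq> 0"
begin

lemma ricci_tensor_einstein: "ricci_tensor UNIV br m y z = lam * m y z"
  using ricci_op_ricci_tensor(2)[OF subspace_UNIV nondegenerate_UNIV UNIV_I] einstein
  by (simp add: m_scale_left)

lemma trace_form_ad_on_g:
  assumes X: "X \<in> a" and Y: "Y \<in> a"
  shows "trace_form g (ad_on_g X) (ad_on_g Y) = - lam * m X Y"
proof -
  have "trace_form g (ad_on_g X) (ad_on_g Y) = trace_on g (\<lambda>e. br X (br Y e))"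
    unfolding trace_form_def
    by (rule trace_on_cong[OF subspace_g]) (simp add: ad_on_g_def br_right_in_g)
  also have "\<dots> = - lam * m X Y"
    using ricci_tensor_a_a[OF Y X] ricci_tensor_einstein[of Y X] m_commute[of X Y] by simp
  finally show ?thesis .
qed

lemma ad_on_g_trace_form_nondegenerate:
  assumes X: "X \<in> a" and "\<And>Y. Y \<in> a \<Longrightarrow> trace_form g (ad_on_g X) (ad_on_g Y) = 0"
  shows "X = 0"
proof -
  have "m X Y = 0" if "Y \<in> a" for Y
    using assms(2)[OF that] trace_form_ad_on_g[OF X that] lam_nonzero by simp
  then show ?thesis using nondegenerate_a X unfolding nondegenerate_on_def by blast
qed

lemma trace_form_nondegenerate_on_ad_on_g_image:
  assumes "X' \<in> ad_on_g ` a" "\<forall>Y'\<in>ad_on_g ` a. trace_form g X' Y' = 0"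
  shows "X' = (\<lambda>_. 0)"
proof -
  obtain X where X: "X \<in> a" "X' = ad_on_g X" using assms(1) by blast
  then have "X = 0" using assms(2) by (intro ad_on_g_trace_form_nondegenerate) auto
  then show ?thesis using X(2) ad_on_g_zero by simp
qed

lemma inj_on_ad_on_g: "inj_on ad_on_g a"
proof (rule inj_onI)
  fix X Y assume X: "X \<in> a" and Y: "Y \<in> a" and eq: "ad_on_g X = ad_on_g Y"
  have "br X x = br Y x" if "x \<in> g" for x using fun_cong[OF eq, of x] that by (simp add: ad_on_g_def)
  then have "ad_on_g (X - Y) = ad_on_g 0" by (simp add: fun_eq_iff ad_on_g_def br_diff_left br_zero_left)
  then have "trace_form g (ad_on_g (X - Y)) (ad_on_g Z) = 0" if "Z \<in> a" for Z
    using trace_form_ad_on_g[OF subspace_0[OF subspace_a] that] by (simp add: m_zero_left)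
  then have "X - Y = 0"
    by (intro ad_on_g_trace_form_nondegenerate subspace_diff[OF subspace_a X Y])
  then show "X = Y" by simp
qed

lemma ricci_op_g:
  assumes x: "x \<in> g"
  shows "ricci_op g br m x = lam *\<^sub>R x + ad_on_g mean_curvature_vector x"
proof (rule ricci_op_eqI[OF subspace_g nondegenerate_g])
  show "lam *\<^sub>R x + ad_on_g mean_curvature_vector x \<in> g"
    using x br_right_in_g subspace_g by (simp add: ad_on_g_def subspace_add subspace_scale)
  fix z assume z: "z \<in> g"
  show "m (lam *\<^sub>R x + ad_on_g mean_curvature_vector x) z = ricci_tensor g br m x z"
    using ricci_tensor_g_g[OF x z] x by (simp add: ricci_tensor_einstein ad_on_g_def m_simps)
qed

text \<open>The isomorphism sends (v, ad X|g) to v + X; it is well defined because X \<mapsto> ad X|g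
  is injective on a.\<close>

definition iso :: "'v \<times> ('v \<Rightarrow> 'v) \<Rightarrow> 'v" where
  "iso p = fst p + inv_into a ad_on_g (snd p)"

lemma iso_ad_on_g: "X \<in> a \<Longrightarrow> iso (v, ad_on_g X) = v + X"
  by (simp add: iso_def inv_into_f_f[OF inj_on_ad_on_g])

lemma bij_betw_iso: "bij_betw iso (g \<times> ad_on_g ` a) UNIV"
  unfolding bij_betw_def
proof
  show "inj_on iso (g \<times> ad_on_g ` a)"
  proof (rule inj_onI)
    fix p q assume "p \<in> g \<times> ad_on_g ` a" "q \<in> g \<times> ad_on_g ` a" and eq: "iso p = iso q"
    then obtain v X w Y where p: "p = (v, ad_on_g X)" "v \<in> g" "X \<in> a"
      and q: "q = (w, ad_on_g Y)" "w \<in> g" "Y \<in> a" by blast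
    have vw: "v - w = Y - X" using eq p q iso_ad_on_g by (simp add: algebra_simps)
    moreover have "v - w \<in> g" "Y - X \<in> a"
      using p q subspace_diff subspace_g subspace_a by blast+
    ultimately have "Y - X = 0" using g_inter_a by metis
    then show "p = q" using p q vw by simp
  qed
  show "iso ` (g \<times> ad_on_g ` a) = UNIV"
  proof (intro set_eqI iffI)
    fix u :: 'v
    obtain x y where "x \<in> g" "y \<in> a" "u = x + y" by (rule g_a_decomp)
    then show "u \<in> iso ` (g \<times> ad_on_g ` a)" using iso_ad_on_g by (metis image_eqI mem_Sigma_iff)
  qed simp
qed

lemma sd_isometric_iso: "sd_isometric_iso UNIV br m g (ad_on_g ` a) lam iso"
  unfolding sd_isometric_iso_def
proof (intro conjI ballI allI bij_betw_iso)
  fix v w X' Y' c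
  assume v: "v \<in> g" and w: "w \<in> g" and "X' \<in> ad_on_g ` a" "Y' \<in> ad_on_g ` a"
  then obtain X Y where X: "X \<in> a" "X' = ad_on_g X" and Y: "Y \<in> a" "Y' = ad_on_g Y" by blast
  show "iso (v + w, \<lambda>u. X' u + Y' u) = iso (v, X') + iso (w, Y')"
    using iso_ad_on_g[OF subspace_add[OF subspace_a X(1) Y(1)]] unfolding X(2) Y(2) ad_on_g_add
    by (simp add: iso_ad_on_g X(1) Y(1) algebra_simps)
  show "iso (c *\<^sub>R v, \<lambda>u. c *\<^sub>R X' u) = c *\<^sub>R iso (v, X')"
    using iso_ad_on_g[OF subspace_scale[OF subspace_a X(1)]] unfolding X(2) ad_on_g_scale
    by (simp add: iso_ad_on_g X(1) algebra_simps)
  have "sd_bracket br (v, X') (w, Y') = (br v w + X' w - Y' v, \<lambda>u. X' (Y' u) - Y' (X' u))"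
    by (simp add: sd_bracket_def)
  also have "\<dots> = (br v w + br X w - br Y v, ad_on_g 0)"
    unfolding X(2) Y(2) ad_on_g_commutator[OF X(1) Y(1)] using v w by (simp add: ad_on_g_def)
  finally show "iso (sd_bracket br (v, X') (w, Y')) = br (iso (v, X')) (iso (w, Y'))"
    unfolding X(2) Y(2) using br_a_a[OF X(1) Y(1)] br_anticommute[of v Y]
    by (simp add: iso_ad_on_g subspace_0[OF subspace_a] X(1) Y(1) br_simps algebra_simps)
  show "m (iso (v, X')) (iso (w, Y')) = sd_metric g m lam (v, X') (w, Y')"
    unfolding sd_metric_def X(2) Y(2)
    using trace_form_ad_on_g[OF X(1) Y(1)] m_g_a[OF v Y(1)] m_a_g[OF w X(1)] lam_nonzero
    by (simp add: iso_ad_on_g X(1) Y(1) m_simps)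
qed

end

theorem corollary4p6:
  fixes br :: "'v::euclidean_space \<Rightarrow> 'v \<Rightarrow> 'v"
    and m :: "'v \<Rightarrow> 'v \<Rightarrow> real"
    and lam :: real
    and g a :: "'v set"
  assumes "lie_algebra UNIV br"
    and "solvable UNIV br"
    and "metric_on UNIV m"
    and "\<forall>x. ricci_op UNIV br m x = lam *\<^sub>R x"
    and "lam \<noteq> 0"
    and "pseudo_iwasawa UNIV br m g a"
  shows "\<exists>D. D \<in> derivations g br \<and> (\<forall>x\<in>g. ricci_op g br m x = lam *\<^sub>R x + D x) \<and>
           (\<exists>A. der_subalgebra g br A \<and> D \<in> A \<and> (\<forall>X\<in>A. self_adjoint_on g m X) \<and>
                (\<forall>X\<in>A. (\<forall>Y\<in>A. trace_form g X Y = 0) \<longrightarrow> X = (\<lambda>_. 0)) \<and>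
                (\<exists>\<Phi>. sd_isometric_iso UNIV br m g A lam \<Phi>))"
proof -
  interpret einstein_pseudo_iwasawa br m g a lam
    by (intro einstein_pseudo_iwasawa.intro pseudo_iwasawa_metric.intro
        einstein_pseudo_iwasawa_axioms.intro) (fact assms(1,3-6))+
  show ?thesis
  proof (intro exI conjI)
    show "ad_on_g mean_curvature_vector \<in> derivations g br" by (rule ad_on_g_derivation)
    show "\<forall>x\<in>g. ricci_op g br m x = lam *\<^sub>R x + ad_on_g mean_curvature_vector x"
      using ricci_op_g by blast
    show "der_subalgebra g br (ad_on_g ` a)" by (rule der_subalgebra_ad_on_g)
    show "ad_on_g mean_curvature_vector \<in> ad_on_g ` a" using mean_curvature_vector(1) by (rule imageI)
    show "\<forall>X\<in>ad_on_g ` a. self_adjoint_on g m X" using ad_on_g_self_adjoint by blast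
    show "\<forall>X\<in>ad_on_g ` a. (\<forall>Y\<in>ad_on_g ` a. trace_form g X Y = 0) \<longrightarrow> X = (\<lambda>_. 0)"
      using trace_form_nondegenerate_on_ad_on_g_image by blast
    show "sd_isometric_iso UNIV br m g (ad_on_g ` a) lam iso" by (rule sd_isometric_iso)
  qed
qed

end
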